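(* In the $\ell^2$ linear social choice setting, on every instance with $n$ voters the uniform projection rule $f_{\mathrm{UProj2}}$ satisfies $\mathbb{E}_{c\sim f_{\mathrm{UProj2}}}[\mathrm{UW}(c)]\ge\frac nd$. Consequently $\mathrm{D}(f_{\mathrm{UProj2}})=O(d)$.
   Context: Setting ($\ell^2$ linear social choice). Fix a dimension $d$. An instance consists of $n$ voters and $m$ candidates, each a vector in $\mathbb{R}^d_{\ge 0}$ with Euclidean norm $1$ (superscripts denote coordinates), with every voter vector in $\mathrm{Cone}(C)$ (nonnegative linear combinations of the candidate vectors $C$). Utility $u_v(c)=v^\top c$; voters report consistent rankings; $\mathrm{UW}(c)=\sum_v u_v(c)$. A randomized rule may use the profile and candidate vectors but not the voter vectors. Distortion on an instance: $\max_c\mathrm{UW}(c)/\mathbb{E}_{c\sim f}[\mathrm{UW}(c)]$; $\mathrm{D}(f)$ is the supremum over instances, as a function of $d$. Uniform projection rule $f_{\mathrm{UProj2}}$: with $\mu_2=(1/\sqrt d,\dots,1/\sqrt d)$, output a distribution $(p_c)_{c\in C}$ such that $\hat c=\sum_c p_c c$ minimizes $\mathrm{KL}(\mu_2\|x)=\sum_{i=1}^d\mu_2^i\ln(\mu_2^i/x^i)$ over $x\in\mathrm{CH}(C)$, the convex hull of $C$. *)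

theory Defs
  imports "HOL-Analysis.Analysis"
begin

definition unit_nonneg :: "real ^ 'd \<Rightarrow> bool" where
  "unit_nonneg x \<longleftrightarrow> (\<forall>i. 0 \<le> x $ i) \<and> norm x = 1"

definition lin_cone :: "(real ^ 'd) set \<Rightarrow> (real ^ 'd) set" where
  "lin_cone C = {x. \<exists>a. (\<forall>c\<in>C. 0 \<le> a c) \<and> x = (\<Sum>c\<in>C. a c *\<^sub>R c)}"

definition mu2 :: "real ^ 'd" where
  "mu2 = (\<chi> i. 1 / sqrt (real CARD('d)))"

definition KL_mu2 :: "real ^ 'd \<Rightarrow> real" where
  "KL_mu2 x = (\<Sum>i\<in>UNIV. (mu2::real^'d) $ i * ln (mu2 $ i / x $ i))"

text \<open>x minimizes KL(mu_2 || .) over CH(C); KL is +infinity at points with a zero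
  coordinate, so the minimizer has strictly positive coordinates and is compared
  with all points of CH(C) with strictly positive coordinates.\<close>
definition KL_minimizer :: "(real ^ 'd) set \<Rightarrow> real ^ 'd \<Rightarrow> bool" where
  "KL_minimizer C x \<longleftrightarrow> x \<in> convex hull C \<and> (\<forall>i. 0 < x $ i) \<and>
     (\<forall>y \<in> convex hull C. (\<forall>i. 0 < y $ i) \<longrightarrow> KL_mu2 x \<le> KL_mu2 y)"

definition UW :: "'v set \<Rightarrow> ('v \<Rightarrow> real ^ 'd) \<Rightarrow> real ^ 'd \<Rightarrow> real" where
  "UW V vv c = (\<Sum>v\<in>V. vv v \<bullet> c)"

definition is_UProj2 :: "(real ^ 'd) set \<Rightarrow> (real ^ 'd \<Rightarrow> real) \<Rightarrow> bool" where
  "is_UProj2 C p \<longleftrightarrow> (\<forall>c\<in>C. 0 \<le> p c) \<and> (\<Sum>c\<in>C. p c) = 1 \<and>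
     KL_minimizer C (\<Sum>c\<in>C. p c *\<^sub>R c)"

end

theory Submission
  imports Defs
begin

text \<open>Since \<open>\<mu>\<^sub>2\<close> is uniform, minimising \<open>KL(\<mu>\<^sub>2 \<parallel> x)\<close> over the convex hull means maximising
  \<open>\<Sum>\<^sub>i ln x\<^sup>i\<close>. At the maximiser \<open>x\<close>, moving towards any candidate \<open>c\<close> cannot increase this
  sum; the first-order condition reads \<open>\<Sum>\<^sub>i c\<^sup>i / x\<^sup>i \<le> d\<close>. Cauchy-Schwarz together with
  \<open>0 \<le> c\<^sup>i \<le> 1\<close> and \<open>\<Sum>\<^sub>i (c\<^sup>i)\<^sup>2 = 1\<close> turns this into \<open>c \<bullet> x \<ge> 1/d\<close>. A unit voter \<open>v\<close> in the cone
  of the candidates is a combination of them with total weight at least 1, so \<open>v \<bullet> x \<ge> 1/d\<close>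
  as well; summing over the voters gives expected welfare \<open>\<ge> n/d\<close>, while no candidate has
  welfare above \<open>n\<close>.\<close>

lemma KL_mu2_eq:
  fixes z :: "real ^ 'd"
  assumes "\<forall>i. 0 < z $ i"
  shows "KL_mu2 z = (real CARD('d) * ln (1 / sqrt (real CARD('d))) - (\<Sum>i\<in>UNIV. ln (z $ i)))
    / sqrt (real CARD('d))"
proof -
  define m where "m = 1 / sqrt (real CARD('d))"
  have "m > 0" unfolding m_def by simp
  have "KL_mu2 z = (\<Sum>i\<in>UNIV. m * ln m - m * ln (z $ i))"
    unfolding KL_mu2_def mu2_def m_def [symmetric] using \<open>m > 0\<close> assms
    by (intro sum.cong) (auto simp: ln_div right_diff_distrib less_imp_neq [symmetric])
  also have "\<dots> = (real CARD('d) * ln m - (\<Sum>i\<in>UNIV. ln (z $ i))) * m"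
    by (simp add: sum_subtractf sum_distrib_left algebra_simps)
  finally show ?thesis by (simp add: m_def)
qed

lemma KL_minimizer_maximizes_sum_ln:
  fixes x y :: "real ^ 'd"
  assumes "KL_minimizer C x" "y \<in> convex hull C" "\<forall>i. 0 < y $ i"
  shows "(\<Sum>i\<in>UNIV. ln (y $ i)) \<le> (\<Sum>i\<in>UNIV. ln (x $ i))"
proof -
  have "\<forall>i. 0 < x $ i" "KL_mu2 x \<le> KL_mu2 y"
    using assms unfolding KL_minimizer_def by auto
  then show ?thesis
    using assms(3) by (simp add: KL_mu2_eq divide_le_cancel)
qed

lemma ln_one_plus_ge_div:
  fixes u :: real
  assumes "-1 < u"
  shows "u / (1 + u) \<le> ln (1 + u)"
proof -
  have "ln (1 / (1 + u)) \<le> 1 / (1 + u) - 1"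
    using assms by (intro ln_le_minus_one) auto
  then show ?thesis
    using assms by (simp add: ln_div field_simps)
qed

lemma sum_ln_maximizer_first_order:
  fixes x c :: "real ^ 'd"
  assumes "convex S" "x \<in> S" "c \<in> S" "\<forall>i. 0 < x $ i" "\<forall>i. 0 \<le> c $ i"
    and max: "\<forall>y\<in>S. (\<forall>i. 0 < y $ i) \<longrightarrow> (\<Sum>i\<in>UNIV. ln (y $ i)) \<le> (\<Sum>i\<in>UNIV. ln (x $ i))"
  shows "(\<Sum>i\<in>UNIV. c $ i / x $ i) \<le> real CARD('d)"
proof -
  define r where "r i = c $ i / x $ i - 1" for i
  have r_ge: "-1 \<le> r i" for i
    using assms(4,5) unfolding r_def by (simp add: divide_nonneg_pos)
  \<comment> \<open>\<open>t * h t\<close> bounds from below the change of \<open>\<Sum>\<^sub>i ln\<close> from \<open>x\<close> to \<open>x + t (c - x)\<close>\<close>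
  define h where "h t = (\<Sum>i\<in>UNIV. r i / (1 + t * r i))" for t :: real
  have h_nonpos: "h t \<le> 0" if "0 < t" "t < 1" for t
  proof -
    have step_gt: "-1 < t * r i" for i
      using mult_left_mono [OF r_ge [of i], of t] that by simp
    have pos: "0 < 1 + t * r i" for i
      using step_gt [of i] by linarith
    define y where "y = (1 - t) *\<^sub>R x + t *\<^sub>R c"
    have y_eq: "y $ i = x $ i * (1 + t * r i)" for i
      using assms(4) unfolding y_def r_def by (simp add: field_simps less_imp_neq [symmetric])
    have "y \<in> S"
      unfolding y_def using convexD [OF assms(1-3), of "1 - t" t] that by simp
    moreover have "\<forall>i. 0 < y $ i"
      using assms(4) pos by (simp add: y_eq)
    ultimately have "(\<Sum>i\<in>UNIV. ln (y $ i)) \<le> (\<Sum>i\<in>UNIV. ln (x $ i))"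
      using max by blast
    moreover have "ln (y $ i) = ln (x $ i) + ln (1 + t * r i)" for i
      using assms(4) pos [of i] by (simp add: y_eq ln_mult less_imp_neq [symmetric])
    ultimately have "(\<Sum>i\<in>UNIV. ln (1 + t * r i)) \<le> 0"
      by (simp add: sum.distrib)
    moreover have "t * h t \<le> (\<Sum>i\<in>UNIV. ln (1 + t * r i))"
      unfolding h_def sum_distrib_left
      using ln_one_plus_ge_div [OF step_gt] by (intro sum_mono) simp
    ultimately have "t * h t \<le> 0"
      by linarith
    with \<open>0 < t\<close> show ?thesis
      by (simp add: mult_le_0_iff)
  qed
  have "(h \<longlongrightarrow> h 0) (at_right 0)"
    unfolding h_def by (intro tendsto_intros) auto
  moreover have "eventually (\<lambda>t. h t \<le> 0) (at_right 0)"
    unfolding eventually_at_right_field using h_nonpos by (intro exI [of _ 1]) auto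
  ultimately have "h 0 \<le> 0"
    by (rule tendsto_upperbound) simp
  then show ?thesis
    by (simp add: h_def r_def sum_subtractf)
qed

lemma unit_nonneg_sum_ratio_mult_inner_ge_1:
  fixes c x :: "real ^ 'd"
  assumes "unit_nonneg c" "\<forall>i. 0 < x $ i"
  shows "1 \<le> (\<Sum>i\<in>UNIV. c $ i / x $ i) * (c \<bullet> x)"
proof -
  have c_nonneg: "0 \<le> c $ i" and "norm c = 1" for i
    using assms(1) unfolding unit_nonneg_def by auto
  then have c_le_1: "c $ i \<le> 1" for i
    using component_le_norm_cart [of c i] by simp
  have x_pos: "0 < x $ i" for i
    using assms(2) by simp
  have sq_le: "(c $ i)\<^sup>2 \<le> c $ i" for i
    using c_nonneg c_le_1 by (simp add: power2_eq_square mult_left_le)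
  define a where "a i = c $ i / sqrt (x $ i)" for i
  define b where "b i = c $ i * sqrt (x $ i)" for i
  have "1 = (\<Sum>i\<in>UNIV. (c $ i)\<^sup>2)\<^sup>2"
    using \<open>norm c = 1\<close> unfolding norm_eq_1 inner_vec_def by (simp add: power2_eq_square)
  also have "\<dots> = (\<Sum>i\<in>UNIV. a i * b i)\<^sup>2"
  proof -
    have "a i * b i = (c $ i)\<^sup>2" for i
      using x_pos [of i] unfolding a_def b_def by (simp add: power2_eq_square)
    then show ?thesis
      by simp
  qed
  also have "\<dots> \<le> (\<Sum>i\<in>UNIV. (a i)\<^sup>2) * (\<Sum>i\<in>UNIV. (b i)\<^sup>2)"
    by (rule Cauchy_Schwarz_ineq_sum)
  also have "\<dots> \<le> (\<Sum>i\<in>UNIV. c $ i / x $ i) * (c \<bullet> x)"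
  proof (intro mult_mono sum_mono)
    show "(a i)\<^sup>2 \<le> c $ i / x $ i" for i
      using x_pos [of i] sq_le [of i] unfolding a_def by (simp add: power_divide divide_right_mono)
    show "(\<Sum>i\<in>UNIV. (b i)\<^sup>2) \<le> c \<bullet> x"
      unfolding inner_vec_def b_def using x_pos sq_le
      by (intro sum_mono) (simp add: power_mult_distrib mult_right_mono less_imp_le)
  qed (auto intro: sum_nonneg simp: c_nonneg x_pos less_imp_le)
  finally show ?thesis .
qed

lemma KL_minimizer_inner_ge:
  fixes x c :: "real ^ 'd"
  assumes x_min: "KL_minimizer C x" and "c \<in> C" "unit_nonneg c"
  shows "1 / real CARD('d) \<le> c \<bullet> x"
proof -
  have x_pos: "\<forall>i. 0 < x $ i"
    using x_min by (simp add: KL_minimizer_def)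
  have c_nonneg: "\<forall>i. 0 \<le> c $ i"
    using assms(3) by (simp add: unit_nonneg_def)
  have "(\<Sum>i\<in>UNIV. c $ i / x $ i) \<le> real CARD('d)"
  proof (rule sum_ln_maximizer_first_order [OF convex_convex_hull _ _ x_pos c_nonneg])
    show "x \<in> convex hull C"
      using x_min by (simp add: KL_minimizer_def)
    show "c \<in> convex hull C"
      using assms(2) by (rule hull_inc)
  qed (use KL_minimizer_maximizes_sum_ln [OF x_min] in blast)
  moreover have "1 \<le> (\<Sum>i\<in>UNIV. c $ i / x $ i) * (c \<bullet> x)"
    using assms(3) x_pos by (rule unit_nonneg_sum_ratio_mult_inner_ge_1)
  moreover have "0 \<le> c \<bullet> x"
    unfolding inner_vec_def using c_nonneg x_pos by (intro sum_nonneg) (simp add: less_imp_le)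
  ultimately have "1 \<le> real CARD('d) * (c \<bullet> x)"
    by (meson mult_right_mono order_trans)
  then show ?thesis
    by (simp add: divide_le_eq mult.commute)
qed

lemma lin_cone_inner_ge:
  fixes v x :: "real ^ 'd"
  assumes "finite C" "\<forall>c\<in>C. norm c \<le> 1" "v \<in> lin_cone C" "0 \<le> \<beta>" "\<forall>c\<in>C. \<beta> \<le> c \<bullet> x"
  shows "\<beta> * norm v \<le> v \<bullet> x"
proof -
  obtain a where a_nonneg: "\<forall>c\<in>C. 0 \<le> a c" and v_eq: "v = (\<Sum>c\<in>C. a c *\<^sub>R c)"
    using assms(3) unfolding lin_cone_def by auto
  have "norm v \<le> (\<Sum>c\<in>C. norm (a c *\<^sub>R c))"
    unfolding v_eq by (rule norm_sum)
  also have "\<dots> \<le> (\<Sum>c\<in>C. a c)"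
    using a_nonneg assms(2) by (intro sum_mono) (simp add: mult_left_le)
  finally have "\<beta> * norm v \<le> \<beta> * (\<Sum>c\<in>C. a c)"
    using assms(4) by (rule mult_left_mono)
  also have "\<dots> = (\<Sum>c\<in>C. a c * \<beta>)"
    by (simp add: sum_distrib_left mult.commute)
  also have "\<dots> \<le> (\<Sum>c\<in>C. a c * (c \<bullet> x))"
    using a_nonneg assms(5) by (intro sum_mono mult_left_mono) auto
  also have "\<dots> = v \<bullet> x"
    unfolding v_eq by (simp add: inner_sum_left)
  finally show ?thesis .
qed

lemma expected_UW_eq_UW_mean:
  "(\<Sum>c\<in>C. p c * UW V vv c) = UW V vv (\<Sum>c\<in>C. p c *\<^sub>R c)"
  unfolding UW_def by (simp add: inner_sum_right sum_distrib_left sum.swap [of _ C V] mult.commute)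

lemma UW_le_card:
  assumes "\<forall>v\<in>V. norm (vv v) \<le> 1" "norm c \<le> 1"
  shows "UW V vv c \<le> real (card V)"
proof -
  have "vv v \<bullet> c \<le> 1" if "v \<in> V" for v
    using norm_cauchy_schwarz [of "vv v" c] mult_mono [of "norm (vv v)" 1 "norm c" 1] assms that
    by simp
  then have "UW V vv c \<le> (\<Sum>v\<in>V. 1)"
    unfolding UW_def by (rule sum_mono)
  then show ?thesis
    by simp
qed

theorem theorem16:
  fixes C :: "(real ^ 'd) set" and V :: "'v set" and vv :: "'v \<Rightarrow> real ^ 'd"
    and p :: "real ^ 'd \<Rightarrow> real"
  assumes "finite C" and "C \<noteq> {}" and "\<forall>c\<in>C. unit_nonneg c"
    and "finite V" and "\<forall>v\<in>V. unit_nonneg (vv v) \<and> vv v \<in> lin_cone C"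
    and "is_UProj2 C p"
  shows "(\<Sum>c\<in>C. p c * UW V vv c) \<ge> real (card V) / real CARD('d)
    \<and> (\<forall>c\<in>C. UW V vv c / (\<Sum>c'\<in>C. p c' * UW V vv c') \<le> real CARD('d))"
proof -
  define x where "x = (\<Sum>c\<in>C. p c *\<^sub>R c)"
  have x_min: "KL_minimizer C x"
    using assms(6) unfolding is_UProj2_def x_def by auto
  have "1 / real CARD('d) \<le> vv v \<bullet> x" if "v \<in> V" for v
    using lin_cone_inner_ge [OF assms(1), of "vv v" "1 / real CARD('d)" x] that assms(3,5)
      KL_minimizer_inner_ge [OF x_min] by (auto simp: unit_nonneg_def)
  then have welfare_ge: "real (card V) / real CARD('d) \<le> UW V vv x"
    unfolding UW_def using sum_mono [of V "\<lambda>_. 1 / real CARD('d)"] by simp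
  moreover have "UW V vv c / UW V vv x \<le> real CARD('d)" if "c \<in> C" for c
  proof -
    have "UW V vv c \<le> real CARD('d) * UW V vv x"
      using UW_le_card [of V vv c] welfare_ge that assms(3,5)
      by (simp add: unit_nonneg_def divide_le_eq mult.commute)
    moreover have "0 \<le> UW V vv x"
      using welfare_ge divide_nonneg_nonneg [of "real (card V)" "real CARD('d)"] by linarith
    ultimately show ?thesis
      by (simp add: divide_le_eq)
  qed
  ultimately show ?thesis
    by (simp add: expected_UW_eq_UW_mean x_def)
qed

end
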